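(* Let $f,g\in\mathrm{Diffeo}^-(\mathbb{R})$ with $f(0)=g(0)=0$. Then the following two conditions are equivalent: (1) $f=h^{-1}\circ g\circ h$ for some $h\in\mathrm{Diffeo}^+(\mathbb{R})$. (2) (a) There exists $h_1\in\mathrm{Diffeo}^+(\mathbb{R})$ with $h_1(0)=0$ such that $f\circ f=h_1^{-1}\circ (g\circ g)\circ h_1$; and (b) letting $g_1=h_1^{-1}\circ g\circ h_1$, there exists $h_2\in\mathrm{Diffeo}^+(\mathbb{R})$ with $h_2(0)=0$ and $h_2\circ(f\circ f)=(f\circ f)\circ h_2$, such that $T_0 f=(T_0h_2)^{-1}\circ (T_0 g_1)\circ (T_0 h_2)$ in the group of formal power series under composition.
   Context: $\mathrm{Diffeo}(\mathbb{R})$ is the group of $C^\infty$ diffeomorphisms of $\mathbb{R}$ under composition; $\mathrm{Diffeo}^+(\mathbb{R})$ (resp. $\mathrm{Diffeo}^-(\mathbb{R})$) is the set of orientation-preserving (resp. orientation-reversing) diffeomorphisms. For a diffeomorphism $\phi$ with $\phi(0)=0$, $T_0\phi$ denotes its Taylor series at $0$, $T_0\phi=\phi'(0)X+\frac{\phi''(0)}{2}X^2+\cdots$, regarded as an element of the group $F$ of formally invertible formal power series with real coefficients in the indeterminate $X$ (zero constant term, nonzero coefficient of $X$), with group operation formal composition and $^{-1}$ denoting compositional inverse; $T_0$ is a homomorphism from the group of diffeomorphisms fixing $0$ to $F$. *)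

theory Defs
  imports "HOL-Analysis.Analysis" "HOL-Computational_Algebra.Formal_Power_Series"
begin

definition smooth_real :: "(real \<Rightarrow> real) \<Rightarrow> bool" where
  "smooth_real f \<longleftrightarrow> (\<forall>n. \<forall>x. ((deriv ^^ n) f) differentiable (at x))"

definition diffeo :: "(real \<Rightarrow> real) \<Rightarrow> bool" where
  "diffeo f \<longleftrightarrow> bij f \<and> smooth_real f \<and> smooth_real (inv f)"

definition diffeo_plus :: "(real \<Rightarrow> real) \<Rightarrow> bool" where
  "diffeo_plus f \<longleftrightarrow> diffeo f \<and> (\<forall>x y. x < y \<longrightarrow> f x < f y)"

definition diffeo_minus :: "(real \<Rightarrow> real) \<Rightarrow> bool" where
  "diffeo_minus f \<longleftrightarrow> diffeo f \<and> (\<forall>x y. x < y \<longrightarrow> f y < f x)"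

definition taylor0 :: "(real \<Rightarrow> real) \<Rightarrow> real fps" where
  "taylor0 f = Abs_fps (\<lambda>n. (deriv ^^ n) f 0 / fact n)"

end

theory Submission
  imports Defs
begin

unbundle no vec_syntax
notation fps_nth (infixl "$" 75)

text \<open>
  The implication (1) \<Longrightarrow> (2) holds with \<open>h1 = h\<close> and \<open>h2 = id\<close>. For the converse,
  conjugate \<open>g\<close> by \<open>h1\<close> to \<open>g1\<close>, so that \<open>f \<circ> f = g1 \<circ> g1\<close> and \<open>T\<^sub>0 h2\<close> conjugates
  \<open>T\<^sub>0 f\<close> to \<open>T\<^sub>0 g1\<close>. Glue \<open>H = h2\<close> on the positive half-line to \<open>L = g1 \<circ> h2 \<circ> f\<^sup>-\<^sup>1\<close>
  on the negative one. Since \<open>f\<close> swaps the half-lines and \<open>h2\<close> commutes with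
  \<open>f \<circ> f = g1 \<circ> g1\<close>, this \<open>H\<close> satisfies \<open>H \<circ> f = g1 \<circ> H\<close>. The formal condition says
  exactly that \<open>L\<close> and \<open>h2\<close> have the same Taylor series at \<open>0\<close>, so \<open>H\<close> and its
  inverse are \<open>C\<^sup>\<infinity>\<close>, and \<open>h1 \<circ> H\<close> conjugates \<open>f\<close> to \<open>g\<close>.
\<close>

section \<open>Functions of class \<open>C\<^sup>n\<close> and \<open>C\<^sup>\<infinity>\<close>\<close>

definition differentiable_n_times :: "nat \<Rightarrow> (real \<Rightarrow> real) \<Rightarrow> bool" where
  "differentiable_n_times n f \<longleftrightarrow> (\<forall>k<n. \<forall>x. ((deriv ^^ k) f) differentiable (at x))"

lemma differentiable_n_times_0 [simp]: "differentiable_n_times 0 f"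
  by (simp add: differentiable_n_times_def)

lemma differentiable_n_times_Suc:
  "differentiable_n_times (Suc n) f \<longleftrightarrow>
     (\<forall>x. f differentiable (at x)) \<and> differentiable_n_times n (deriv f)"
  unfolding differentiable_n_times_def
  by (auto simp: less_Suc_eq_0_disj funpow_Suc_right simp del: funpow.simps)

lemma smooth_real_iff_differentiable_n_times:
  "smooth_real f \<longleftrightarrow> (\<forall>n. differentiable_n_times n f)"
  unfolding smooth_real_def differentiable_n_times_def by (meson lessI)

lemma smooth_real_iff_deriv:
  "smooth_real f \<longleftrightarrow> (\<forall>x. f differentiable (at x)) \<and> smooth_real (deriv f)"
  unfolding smooth_real_iff_differentiable_n_times
  by (metis differentiable_n_times_Suc differentiable_n_times_0 not0_implies_Suc)

lemma smooth_real_differentiable: "smooth_real f \<Longrightarrow> f differentiable (at x)"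
  using smooth_real_iff_deriv by blast

lemma smooth_real_deriv: "smooth_real f \<Longrightarrow> smooth_real (deriv f)"
  using smooth_real_iff_deriv by blast

lemma smooth_real_has_real_derivative:
  "smooth_real f \<Longrightarrow> (f has_real_derivative deriv f x) (at x)"
  by (simp add: DERIV_deriv_iff_real_differentiable smooth_real_differentiable)

lemma deriv_fun_add:
  fixes f g :: "real \<Rightarrow> real"
  assumes "\<forall>x. f differentiable (at x)" and "\<forall>x. g differentiable (at x)"
  shows "deriv (\<lambda>x. f x + g x) = (\<lambda>x. deriv f x + deriv g x)"
  using assms
  by (intro ext DERIV_imp_deriv DERIV_add) (simp_all add: DERIV_deriv_iff_real_differentiable)

lemma deriv_fun_mult:
  fixes f g :: "real \<Rightarrow> real"
  assumes "\<forall>x. f differentiable (at x)" and "\<forall>x. g differentiable (at x)"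
  shows "deriv (\<lambda>x. f x * g x) = (\<lambda>x. f x * deriv g x + deriv f x * g x)"
proof (rule ext, rule DERIV_imp_deriv)
  fix x
  have "(f has_real_derivative deriv f x) (at x)" "(g has_real_derivative deriv g x) (at x)"
    using assms by (simp_all add: DERIV_deriv_iff_real_differentiable)
  from DERIV_mult[OF this]
  show "((\<lambda>x. f x * g x) has_real_derivative f x * deriv g x + deriv f x * g x) (at x)"
    by (simp add: algebra_simps)
qed

lemma deriv_fun_comp:
  fixes f g :: "real \<Rightarrow> real"
  assumes "\<forall>x. f differentiable (at x)" and "\<forall>x. g differentiable (at x)"
  shows "deriv (f \<circ> g) = (\<lambda>x. deriv f (g x) * deriv g x)"
  using assms
  by (intro ext DERIV_imp_deriv DERIV_chain) (simp_all add: DERIV_deriv_iff_real_differentiable)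

lemma differentiable_n_times_const: "differentiable_n_times n (\<lambda>_. c)"
  by (induction n arbitrary: c) (simp_all add: differentiable_n_times_Suc)

lemma differentiable_n_times_add:
  "differentiable_n_times n f \<Longrightarrow> differentiable_n_times n g \<Longrightarrow>
   differentiable_n_times n (\<lambda>x. f x + g x)"
  by (induction n arbitrary: f g) (simp_all add: differentiable_n_times_Suc deriv_fun_add)

lemma differentiable_n_times_mult:
  "differentiable_n_times n f \<Longrightarrow> differentiable_n_times n g \<Longrightarrow>
   differentiable_n_times n (\<lambda>x. f x * g x)"
proof (induction n arbitrary: f g)
  case (Suc n)
  then have "differentiable_n_times n f" "differentiable_n_times n g"
    by (auto simp: differentiable_n_times_def)
  with Suc show ?case
    by (simp add: differentiable_n_times_Suc deriv_fun_mult Suc.IH differentiable_n_times_add)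
qed simp

lemma differentiable_n_times_comp:
  "differentiable_n_times n f \<Longrightarrow> differentiable_n_times n g \<Longrightarrow>
   differentiable_n_times n (f \<circ> g)"
proof (induction n arbitrary: f g)
  case (Suc n)
  then have f: "\<forall>x. f differentiable (at x)" "differentiable_n_times n (deriv f)"
    and g: "\<forall>x. g differentiable (at x)" "differentiable_n_times n (deriv g)"
    by (simp_all add: differentiable_n_times_Suc)
  have "differentiable_n_times n (deriv f \<circ> g)"
    using Suc.prems f g by (intro Suc.IH) (auto simp: differentiable_n_times_def)
  from differentiable_n_times_mult[OF this g(2)]
  have "differentiable_n_times n (deriv (f \<circ> g))"
    using f g by (simp add: deriv_fun_comp)
  moreover have "\<forall>x. (f \<circ> g) differentiable (at x)"
    using f g by (simp add: differentiable_chain_at)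
  ultimately show ?case unfolding differentiable_n_times_Suc by blast
qed simp

lemma smooth_real_const: "smooth_real (\<lambda>_. c)"
  by (simp add: smooth_real_iff_differentiable_n_times differentiable_n_times_const)

lemma smooth_real_id: "smooth_real id"
  unfolding smooth_real_iff_deriv[of id] by (simp add: smooth_real_const id_def differentiable_ident)

lemma smooth_real_mult: "smooth_real f \<Longrightarrow> smooth_real g \<Longrightarrow> smooth_real (\<lambda>x. f x * g x)"
  by (simp add: smooth_real_iff_differentiable_n_times differentiable_n_times_mult)

lemma smooth_real_comp: "smooth_real f \<Longrightarrow> smooth_real g \<Longrightarrow> smooth_real (f \<circ> g)"
  by (simp add: smooth_real_iff_differentiable_n_times differentiable_n_times_comp)

section \<open>Formal power series\<close>

lemma fps_nth_Suc_eqI: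
  fixes A B :: "'a::field_char_0 fps"
  assumes "fps_deriv A $ n = fps_deriv B $ n"
  shows "A $ Suc n = B $ Suc n"
  using assms by (metis fps_deriv_nth mult_cancel_left of_nat_neq_0 Suc_eq_plus1)

lemma fps_eq_by_deriv:
  fixes A B :: "'a::field_char_0 fps"
  assumes "A $ 0 = B $ 0" and "fps_deriv A = fps_deriv B"
  shows "A = B"
  using assms by (simp add: fps_deriv_eq_iff)

lemma fps_mult_nth_cong:
  assumes "\<And>k. k \<le> n \<Longrightarrow> A $ k = A' $ k" and "\<And>k. k \<le> n \<Longrightarrow> B $ k = B' $ k"
  shows "(A * B) $ n = (A' * B') $ n"
  using assms by (auto simp: fps_mult_nth intro!: sum.cong)

lemma fps_compose_cancel_right:
  fixes A B C :: "'a::field fps"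
  assumes "A oo B = C oo B" and "B $ 0 = 0" and "B $ 1 \<noteq> 0"
  shows "A = C"
proof -
  have inv0: "fps_inv B $ 0 = 0" by (simp add: fps_inv_def)
  have "A = (A oo B) oo fps_inv B" "C = (C oo B) oo fps_inv B"
    using assms(2,3) inv0 by (simp_all add: fps_compose_assoc[symmetric] fps_inv_right)
  with assms(1) show ?thesis by simp
qed

lemma fps_inv_eqI:
  fixes P A :: "'a::field fps"
  assumes "P oo A = fps_X" and "A $ 0 = 0" and "A $ 1 \<noteq> 0"
  shows "P = fps_inv A"
  by (rule fps_compose_cancel_right[of _ A]) (use assms in \<open>simp_all add: fps_inv\<close>)

lemma fps_inv_X: "fps_inv fps_X = (fps_X :: 'a::field fps)"
  by (rule fps_inv_eqI[symmetric]) simp_all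

lemma fps_compose_inv_conjugateD:
  fixes A B C :: "'a::field fps"
  assumes "A = fps_inv B oo (C oo B)" and "B $ 0 = 0" and "B $ 1 \<noteq> 0" and "C $ 0 = 0"
  shows "B oo A = C oo B"
proof -
  have "fps_inv B $ 0 = 0" by (simp add: fps_inv_def)
  with assms have "B oo A = (B oo fps_inv B) oo (C oo B)"
    by (simp add: fps_compose_assoc)
  with assms(2,3,4) show ?thesis by (simp add: fps_inv_right)
qed

section \<open>Taylor series at \<open>0\<close>\<close>

lemma taylor0_nth: "taylor0 f $ n = (deriv ^^ n) f 0 / fact n"
  by (simp add: taylor0_def)

lemma fps_deriv_taylor0: "fps_deriv (taylor0 f) = taylor0 (deriv f)"
proof (rule fps_ext)
  fix n
  have "(deriv ^^ Suc n) f 0 = (deriv ^^ n) (deriv f) 0"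
    by (simp add: funpow_Suc_right del: funpow.simps)
  then show "fps_deriv (taylor0 f) $ n = taylor0 (deriv f) $ n"
    by (simp add: taylor0_nth field_simps del: funpow.simps of_nat_Suc)
qed

lemma taylor0_eqD: "taylor0 L = taylor0 R \<Longrightarrow> (deriv ^^ n) L 0 = (deriv ^^ n) R 0"
  by (metis taylor0_nth fact_nonzero divide_cancel_right of_nat_eq_0_iff)

lemma funpow_deriv_const: "(deriv ^^ n) (\<lambda>_. c) = (\<lambda>_. if n = 0 then c else 0)"
  by (induction n) simp_all

lemma taylor0_const: "taylor0 (\<lambda>_. c) = fps_const c"
  by (rule fps_ext) (simp add: taylor0_nth funpow_deriv_const)

lemma taylor0_id: "taylor0 id = fps_X"
  by (rule fps_eq_by_deriv) (simp_all add: taylor0_nth fps_deriv_taylor0 taylor0_const)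

lemma funpow_deriv_add:
  assumes "smooth_real f" and "smooth_real g"
  shows "(deriv ^^ n) (\<lambda>x. f x + g x) = (\<lambda>x. (deriv ^^ n) f x + (deriv ^^ n) g x)"
  using assms
proof (induction n arbitrary: f g)
  case (Suc n)
  then have "deriv (\<lambda>x. f x + g x) = (\<lambda>x. deriv f x + deriv g x)"
    by (simp add: deriv_fun_add smooth_real_differentiable)
  with Suc show ?case
    by (simp add: funpow_Suc_right smooth_real_deriv del: funpow.simps)
qed simp

lemma taylor0_add:
  "smooth_real f \<Longrightarrow> smooth_real g \<Longrightarrow> taylor0 (\<lambda>x. f x + g x) = taylor0 f + taylor0 g"
  by (rule fps_ext) (simp add: taylor0_nth funpow_deriv_add add_divide_distrib)

lemma taylor0_mult:
  assumes "smooth_real f" and "smooth_real g"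
  shows "taylor0 (\<lambda>x. f x * g x) = taylor0 f * taylor0 g"
proof (rule fps_ext)
  fix n
  show "taylor0 (\<lambda>x. f x * g x) $ n = (taylor0 f * taylor0 g) $ n"
    using assms
  proof (induction n arbitrary: f g)
    case 0
    then show ?case by (simp add: taylor0_nth)
  next
    case (Suc n)
    have f': "smooth_real (deriv f)" and g': "smooth_real (deriv g)"
      using Suc.prems by (simp_all add: smooth_real_deriv)
    have "deriv (\<lambda>x. f x * g x) = (\<lambda>x. f x * deriv g x + deriv f x * g x)"
      using Suc.prems by (simp add: deriv_fun_mult smooth_real_differentiable)
    then have "fps_deriv (taylor0 (\<lambda>x. f x * g x)) $ n
        = (taylor0 (\<lambda>x. f x * deriv g x) + taylor0 (\<lambda>x. deriv f x * g x)) $ n"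
      using Suc.prems f' g' by (simp only: fps_deriv_taylor0 taylor0_add smooth_real_mult)
    also have "\<dots> = (taylor0 f * taylor0 (deriv g) + taylor0 (deriv f) * taylor0 g) $ n"
      using Suc.IH[of "deriv f" g] Suc.IH[of f "deriv g"] Suc.prems f' g' by simp
    also have "\<dots> = fps_deriv (taylor0 f * taylor0 g) $ n"
      by (simp only: fps_deriv_mult fps_deriv_taylor0)
    finally show ?case by (rule fps_nth_Suc_eqI)
  qed
qed

lemma taylor0_comp:
  assumes f: "smooth_real f" and g: "smooth_real g" and g0: "g 0 = 0"
  shows "taylor0 (f \<circ> g) = taylor0 f oo taylor0 g"
proof (rule fps_ext)
  fix n
  show "taylor0 (f \<circ> g) $ n = (taylor0 f oo taylor0 g) $ n"
    using f
  proof (induction n arbitrary: f rule: less_induct)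
    case (less n)
    show ?case
    proof (cases n)
      case 0
      then show ?thesis using g0 by (simp add: taylor0_nth)
    next
      case (Suc m)
      have f': "smooth_real (deriv f)" using less.prems by (rule smooth_real_deriv)
      have "deriv (f \<circ> g) = (\<lambda>x. (deriv f \<circ> g) x * deriv g x)"
        using less.prems g by (simp add: deriv_fun_comp smooth_real_differentiable)
      then have "fps_deriv (taylor0 (f \<circ> g)) $ m = (taylor0 (deriv f \<circ> g) * taylor0 (deriv g)) $ m"
        using f' g by (simp only: fps_deriv_taylor0 taylor0_mult smooth_real_comp smooth_real_deriv)
      \<comment> \<open>The product involves all coefficients up to \<open>m\<close>, hence the strong induction.\<close>
      also have "\<dots> = ((taylor0 (deriv f) oo taylor0 g) * taylor0 (deriv g)) $ m"
      proof (rule fps_mult_nth_cong)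
        show "taylor0 (deriv f \<circ> g) $ k = (taylor0 (deriv f) oo taylor0 g) $ k" if "k \<le> m" for k
          using that Suc by (intro less.IH f') simp
      qed simp
      also have "\<dots> = fps_deriv (taylor0 f oo taylor0 g) $ m"
        using g0 by (simp add: fps_compose_deriv fps_deriv_taylor0 taylor0_nth)
      finally show ?thesis
        unfolding Suc by (rule fps_nth_Suc_eqI)
    qed
  qed
qed

section \<open>Diffeomorphisms of the real line\<close>

lemma diffeo_comp: "diffeo a \<Longrightarrow> diffeo b \<Longrightarrow> diffeo (a \<circ> b)"
  by (auto simp: diffeo_def o_inv_distrib bij_comp smooth_real_comp)

lemma diffeo_inv: "diffeo a \<Longrightarrow> diffeo (inv a)"
  by (auto simp: diffeo_def bij_imp_bij_inv inv_inv_eq)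

lemma diffeo_id: "diffeo id"
  by (simp add: diffeo_def smooth_real_id inv_id)

lemma diffeo_deriv_nonzero:
  assumes "diffeo h"
  shows "deriv h x \<noteq> 0"
proof -
  have h: "bij h" "smooth_real h" "smooth_real (inv h)"
    using assms by (simp_all add: diffeo_def)
  have "((inv h \<circ> h) has_real_derivative deriv (inv h) (h x) * deriv h x) (at x)"
    using h by (intro DERIV_chain smooth_real_has_real_derivative)
  moreover have "inv h \<circ> h = id"
    using h(1) by (simp add: bij_is_inj)
  ultimately have "deriv (inv h) (h x) * deriv h x = 1"
    using DERIV_ident DERIV_unique by (metis id_apply eq_id_iff)
  then show ?thesis by auto
qed

lemma taylor0_diffeo_nth:
  assumes "diffeo h" and "h 0 = 0"
  shows "taylor0 h $ 0 = 0" and "taylor0 h $ 1 \<noteq> 0"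
  using assms diffeo_deriv_nonzero by (simp_all add: taylor0_nth)

lemma taylor0_inv:
  assumes "diffeo h" and "h 0 = 0"
  shows "taylor0 (inv h) = fps_inv (taylor0 h)"
proof (rule fps_inv_eqI)
  have h: "bij h" "smooth_real h" "smooth_real (inv h)"
    using assms(1) by (simp_all add: diffeo_def)
  have "taylor0 (inv h) oo taylor0 h = taylor0 (inv h \<circ> h)"
    using h assms(2) by (simp add: taylor0_comp)
  also have "\<dots> = fps_X"
    using h(1) by (simp add: bij_is_inj taylor0_id)
  finally show "taylor0 (inv h) oo taylor0 h = fps_X" .
qed (use assms taylor0_diffeo_nth in auto)

lemma diffeo_plus_comp: "diffeo_plus a \<Longrightarrow> diffeo_plus b \<Longrightarrow> diffeo_plus (a \<circ> b)"
  by (simp add: diffeo_plus_def diffeo_comp)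

lemma diffeo_plus_comp_minus: "diffeo_plus a \<Longrightarrow> diffeo_minus b \<Longrightarrow> diffeo_minus (a \<circ> b)"
  by (simp add: diffeo_plus_def diffeo_minus_def diffeo_comp)

lemma diffeo_minus_comp_plus: "diffeo_minus a \<Longrightarrow> diffeo_plus b \<Longrightarrow> diffeo_minus (a \<circ> b)"
  by (simp add: diffeo_plus_def diffeo_minus_def diffeo_comp)

lemma diffeo_minus_comp_minus: "diffeo_minus a \<Longrightarrow> diffeo_minus b \<Longrightarrow> diffeo_plus (a \<circ> b)"
  by (simp add: diffeo_plus_def diffeo_minus_def diffeo_comp)

lemma diffeo_plus_inv:
  assumes "diffeo_plus h"
  shows "diffeo_plus (inv h)"
proof -
  have "bij h" and "\<And>x y. x < y \<Longrightarrow> h x < h y"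
    using assms by (simp_all add: diffeo_plus_def diffeo_def)
  then have "inv h x < inv h y" if "x < y" for x y
    using that by (metis bij_inv_eq_iff not_less_iff_gr_or_eq)
  with assms show ?thesis by (simp add: diffeo_plus_def diffeo_inv)
qed

lemma diffeo_minus_inv:
  assumes "diffeo_minus h"
  shows "diffeo_minus (inv h)"
proof -
  have "bij h" and "\<And>x y. x < y \<Longrightarrow> h y < h x"
    using assms by (simp_all add: diffeo_minus_def diffeo_def)
  then have "inv h y < inv h x" if "x < y" for x y
    using that by (metis bij_inv_eq_iff not_less_iff_gr_or_eq)
  with assms show ?thesis by (simp add: diffeo_minus_def diffeo_inv)
qed

lemma diffeo_plus_nonpos_iff: "diffeo_plus h \<Longrightarrow> h 0 = 0 \<Longrightarrow> h x \<le> 0 \<longleftrightarrow> x \<le> 0"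
  unfolding diffeo_plus_def by (metis not_less order_le_less)

lemma diffeo_minus_nonpos_iff: "diffeo_minus h \<Longrightarrow> h 0 = 0 \<Longrightarrow> h x \<le> 0 \<longleftrightarrow> 0 \<le> x"
  unfolding diffeo_minus_def by (metis not_less order_le_less)

lemma diffeo_minus_fixed_point: "diffeo_minus h \<Longrightarrow> h 0 = 0 \<Longrightarrow> h x = x \<Longrightarrow> x = 0"
  unfolding diffeo_minus_def by (metis linorder_neqE_linordered_idom order.asym)

lemma inv_fixes_0: "bij h \<Longrightarrow> h 0 = 0 \<Longrightarrow> inv h 0 = 0"
  by (metis bij_is_inj inv_f_f)

section \<open>Gluing two maps at \<open>0\<close>\<close>

definition glue :: "(real \<Rightarrow> real) \<Rightarrow> (real \<Rightarrow> real) \<Rightarrow> real \<Rightarrow> real" where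
  "glue L R x = (if x \<le> 0 then L x else R x)"

lemma has_real_derivative_glue:
  assumes "\<And>x. (L has_real_derivative L' x) (at x)"
    and "\<And>x. (R has_real_derivative R' x) (at x)"
    and "L 0 = R 0" and "L' 0 = R' 0"
  shows "(glue L R has_real_derivative glue L' R' x) (at x)"
proof -
  let ?S = "{..0::real}" and ?T = "{0::real<..}"
  have boundary: "closure ?S \<inter> closure ?T = {0}" by auto
  have "((\<lambda>x. if x \<in> ?S then L x else R x) has_vector_derivative
      (if x \<in> ?S then L' x else R' x)) (at x within UNIV)"
    by (rule has_vector_derivative_If_within_closures[where S = ?S and T = ?T])
      (use assms in \<open>auto simp: boundary has_real_derivative_iff_has_vector_derivative[symmetric]
         intro: has_field_derivative_at_within\<close>)
  then show ?thesis
    by (simp add: glue_def[abs_def] has_real_derivative_iff_has_vector_derivative)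
qed

lemma funpow_deriv_glue:
  assumes "smooth_real L" and "smooth_real R" and "taylor0 L = taylor0 R"
  shows "(deriv ^^ n) (glue L R) = glue ((deriv ^^ n) L) ((deriv ^^ n) R)"
  using assms
proof (induction n arbitrary: L R)
  case 0
  then show ?case by (simp add: fun_eq_iff)
next
  case (Suc n)
  have "(glue L R has_real_derivative glue (deriv L) (deriv R) x) (at x)" for x
    using Suc.prems taylor0_eqD[OF Suc.prems(3), of 0] taylor0_eqD[OF Suc.prems(3), of 1]
    by (intro has_real_derivative_glue smooth_real_has_real_derivative) simp_all
  then have "deriv (glue L R) = glue (deriv L) (deriv R)"
    by (intro ext DERIV_imp_deriv)
  moreover have "taylor0 (deriv L) = taylor0 (deriv R)"
    using Suc.prems(3) by (metis fps_deriv_taylor0)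
  ultimately show ?case
    using Suc.prems by (simp add: funpow_Suc_right Suc.IH smooth_real_deriv del: funpow.simps)
qed

lemma smooth_real_glue:
  assumes "smooth_real L" and "smooth_real R" and "taylor0 L = taylor0 R"
  shows "smooth_real (glue L R)"
  unfolding smooth_real_def
proof (intro allI)
  fix n x
  have D: "((deriv ^^ n) f has_real_derivative (deriv ^^ Suc n) f y) (at y)" if "smooth_real f" for f y
    using that by (simp add: smooth_real_def DERIV_deriv_iff_real_differentiable)
  have "(glue ((deriv ^^ n) L) ((deriv ^^ n) R) has_real_derivative
      glue ((deriv ^^ Suc n) L) ((deriv ^^ Suc n) R) x) (at x)"
    using D[OF assms(1)] D[OF assms(2)] taylor0_eqD[OF assms(3), of n]
      taylor0_eqD[OF assms(3), of "Suc n"]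
    by (rule has_real_derivative_glue)
  then show "(deriv ^^ n) (glue L R) differentiable (at x)"
    unfolding funpow_deriv_glue[OF assms] real_differentiable_def by blast
qed

lemma glue_inverse:
  assumes L: "diffeo_plus L" "L 0 = 0" and R: "diffeo_plus R" "R 0 = 0"
  shows "bij (glue L R)" and "inv (glue L R) = glue (inv L) (inv R)"
proof -
  have "bij L" "bij R"
    using L R by (simp_all add: diffeo_plus_def diffeo_def)
  then have inv: "\<And>x. inv L (L x) = x" "\<And>x. inv R (R x) = x"
    and surj: "\<And>y. L (inv L y) = y" "\<And>y. R (inv R y) = y"
    by (simp_all add: bij_is_inj bij_is_surj surj_f_inv_f)
  have "inv L 0 = 0" "inv R 0 = 0"
    using L R \<open>bij L\<close> \<open>bij R\<close> by (simp_all add: inv_fixes_0)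
  note signs = diffeo_plus_nonpos_iff[OF L] diffeo_plus_nonpos_iff[OF R]
    diffeo_plus_nonpos_iff[OF diffeo_plus_inv[OF L(1)] \<open>inv L 0 = 0\<close>]
    diffeo_plus_nonpos_iff[OF diffeo_plus_inv[OF R(1)] \<open>inv R 0 = 0\<close>]
  have "glue L R \<circ> glue (inv L) (inv R) = id" "glue (inv L) (inv R) \<circ> glue L R = id"
    by (simp_all add: fun_eq_iff glue_def signs inv surj)
  then show "bij (glue L R)" and "inv (glue L R) = glue (inv L) (inv R)"
    by (auto intro: o_bij inv_unique_comp)
qed

lemma diffeo_plus_glue:
  assumes L: "diffeo_plus L" "L 0 = 0" and R: "diffeo_plus R" "R 0 = 0"
    and same_taylor: "taylor0 L = taylor0 R"
  shows "diffeo_plus (glue L R)"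
proof -
  have "diffeo L" "diffeo R"
    using L R by (simp_all add: diffeo_plus_def)
  then have "taylor0 (inv L) = taylor0 (inv R)"
    using L R same_taylor by (simp add: taylor0_inv)
  then have smooth: "smooth_real (glue L R)" "smooth_real (inv (glue L R))"
    using \<open>diffeo L\<close> \<open>diffeo R\<close> same_taylor
    by (simp_all add: smooth_real_glue glue_inverse[OF L R] diffeo_def)
  have "glue L R x < glue L R y" if "x < y" for x y
    using that L R diffeo_plus_nonpos_iff[OF L, of x] diffeo_plus_nonpos_iff[OF R, of y]
    unfolding glue_def diffeo_plus_def by auto
  with smooth show ?thesis
    by (simp add: diffeo_plus_def diffeo_def glue_inverse[OF L R])
qed

section \<open>The conjugacy criterion\<close>

lemma conjugate_comp_conjugate:
  "bij h \<Longrightarrow> (inv h \<circ> g \<circ> h) \<circ> (inv h \<circ> g \<circ> h) = inv h \<circ> (g \<circ> g) \<circ> h"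
  by (simp add: fun_eq_iff bij_is_surj surj_f_inv_f)

lemma taylor0_comp_inv_eq:
  assumes f: "diffeo f" "f 0 = 0" and "smooth_real g" and "smooth_real h" and "h 0 = 0"
    and "taylor0 h oo taylor0 f = taylor0 g oo taylor0 h"
  shows "taylor0 (g \<circ> h \<circ> inv f) = taylor0 h"
proof (rule fps_compose_cancel_right)
  have "bij f" "smooth_real f" "smooth_real (inv f)"
    using f by (simp_all add: diffeo_def)
  then have "taylor0 (g \<circ> h \<circ> inv f) oo taylor0 f = taylor0 (g \<circ> h \<circ> inv f \<circ> f)"
    using assms by (simp add: taylor0_comp smooth_real_comp inv_fixes_0)
  also have "g \<circ> h \<circ> inv f \<circ> f = g \<circ> h"
    using \<open>bij f\<close> by (simp add: o_assoc bij_is_inj)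
  also have "taylor0 (g \<circ> h) = taylor0 h oo taylor0 f"
    using assms by (simp add: taylor0_comp)
  finally show "taylor0 (g \<circ> h \<circ> inv f) oo taylor0 f = taylor0 h oo taylor0 f" .
qed (use f taylor0_diffeo_nth in auto)

lemma glue_intertwines:
  assumes f: "diffeo_minus f" "f 0 = 0" and "g 0 = 0" and "h 0 = 0"
    and squares: "f \<circ> f = g \<circ> g" and commute: "h \<circ> (f \<circ> f) = (f \<circ> f) \<circ> h"
  shows "glue (g \<circ> h \<circ> inv f) h (f x) = g (glue (g \<circ> h \<circ> inv f) h x)"
proof -
  have "bij f"
    using f by (simp add: diffeo_minus_def diffeo_def)
  then have inv_f: "\<And>x. inv f (f x) = x" "\<And>y. f (inv f y) = y" "inv f 0 = 0"
    using f by (simp_all add: bij_is_inj bij_is_surj surj_f_inv_f inv_fixes_0)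
  consider "x < 0" | "x = 0" | "0 < x" by fastforce
  then show ?thesis
  proof cases
    case 1
    then have "0 < f x"
      using diffeo_minus_nonpos_iff[OF f, of x] by auto
    then have "glue (g \<circ> h \<circ> inv f) h (f x) = h (f (f (inv f x)))"
      by (simp add: glue_def inv_f)
    also have "\<dots> = g (g (h (inv f x)))"
      using fun_cong[OF commute, of "inv f x"] fun_cong[OF squares] by simp
    finally show ?thesis
      using 1 by (simp add: glue_def)
  next
    case 2
    then show ?thesis using assms inv_f by (simp add: glue_def)
  next
    case 3
    then show ?thesis
      using diffeo_minus_nonpos_iff[OF f, of x] by (simp add: glue_def inv_f)
  qed
qed

lemma conjugate_of_equal_squares:
  assumes f: "diffeo_minus f" "f 0 = 0" and g: "diffeo_minus g" "g 0 = 0"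
    and squares: "f \<circ> f = g \<circ> g"
    and h: "diffeo_plus h" "h 0 = 0" and commute: "h \<circ> (f \<circ> f) = (f \<circ> f) \<circ> h"
    and formal: "taylor0 h oo taylor0 f = taylor0 g oo taylor0 h"
  shows "\<exists>H. diffeo_plus H \<and> f = inv H \<circ> g \<circ> H"
proof -
  define L where "L = g \<circ> h \<circ> inv f"
  have "bij f"
    using f by (simp add: diffeo_minus_def diffeo_def)
  have "diffeo_plus L" "L 0 = 0"
    unfolding L_def using f g h \<open>bij f\<close>
    by (simp_all add: diffeo_minus_comp_minus diffeo_minus_comp_plus diffeo_minus_inv inv_fixes_0)
  moreover have "taylor0 L = taylor0 h"
    unfolding L_def using f g h formal
    by (intro taylor0_comp_inv_eq) (simp_all add: diffeo_minus_def diffeo_plus_def diffeo_def)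
  ultimately have H: "diffeo_plus (glue L h)"
    using h by (intro diffeo_plus_glue)
  have "bij (glue L h)"
    using H by (simp add: diffeo_plus_def diffeo_def)
  have "f = inv (glue L h) \<circ> g \<circ> glue L h"
  proof
    fix x
    have "g (glue L h x) = glue L h (f x)"
      unfolding L_def by (rule glue_intertwines[OF f g(2) h(2) squares commute, symmetric])
    with \<open>bij (glue L h)\<close> show "f x = (inv (glue L h) \<circ> g \<circ> glue L h) x"
      by (simp add: bij_is_inj)
  qed
  with H show ?thesis by blast
qed

lemma conjugate_of_conjugate_squares:
  assumes f: "diffeo_minus f" "f 0 = 0" and g: "diffeo_minus g" "g 0 = 0"
    and h1: "diffeo_plus h1" "h1 0 = 0" and squares: "f \<circ> f = inv h1 \<circ> (g \<circ> g) \<circ> h1"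
    and h2: "diffeo_plus h2" "h2 0 = 0" and commute: "h2 \<circ> (f \<circ> f) = (f \<circ> f) \<circ> h2"
    and formal: "taylor0 f = fps_inv (taylor0 h2) oo (taylor0 (inv h1 \<circ> g \<circ> h1) oo taylor0 h2)"
  shows "\<exists>h. diffeo_plus h \<and> f = inv h \<circ> g \<circ> h"
proof -
  define g1 where "g1 = inv h1 \<circ> g \<circ> h1"
  have "bij h1"
    using h1 by (simp add: diffeo_plus_def diffeo_def)
  have g1: "diffeo_minus g1" "g1 0 = 0"
    unfolding g1_def using g h1 \<open>bij h1\<close>
    by (simp_all add: diffeo_minus_comp_plus diffeo_plus_comp_minus diffeo_plus_inv inv_fixes_0)
  have "diffeo h2"
    using h2 by (simp add: diffeo_plus_def)
  have "taylor0 h2 oo taylor0 f = taylor0 g1 oo taylor0 h2"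
    by (rule fps_compose_inv_conjugateD)
      (use formal g1 taylor0_diffeo_nth[OF \<open>diffeo h2\<close> h2(2)] in \<open>simp_all add: g1_def taylor0_nth\<close>)
  moreover have "f \<circ> f = g1 \<circ> g1"
    using squares \<open>bij h1\<close> by (simp only: g1_def conjugate_comp_conjugate)
  ultimately obtain H where H: "diffeo_plus H" "f = inv H \<circ> g1 \<circ> H"
    using conjugate_of_equal_squares[OF f g1 _ h2 commute] by blast
  have "bij H"
    using H by (simp add: diffeo_plus_def diffeo_def)
  then have "f = inv (h1 \<circ> H) \<circ> g \<circ> (h1 \<circ> H)"
    using H(2) \<open>bij h1\<close> by (simp add: g1_def o_inv_distrib o_assoc)
  with H(1) h1 show ?thesis
    by (blast intro: diffeo_plus_comp)
qed

theorem theorem2p2: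
  fixes f g :: "real \<Rightarrow> real"
  assumes "diffeo_minus f" and "diffeo_minus g" and "f 0 = 0" and "g 0 = 0"
  shows "(\<exists>h. diffeo_plus h \<and> f = inv h \<circ> g \<circ> h) \<longleftrightarrow>
    (\<exists>h1. diffeo_plus h1 \<and> h1 0 = 0 \<and> f \<circ> f = inv h1 \<circ> (g \<circ> g) \<circ> h1 \<and>
       (let g1 = inv h1 \<circ> g \<circ> h1 in
        \<exists>h2. diffeo_plus h2 \<and> h2 0 = 0 \<and> h2 \<circ> (f \<circ> f) = (f \<circ> f) \<circ> h2 \<and>
             taylor0 f = fps_inv (taylor0 h2) oo (taylor0 g1 oo taylor0 h2)))"
    (is "?conjugate \<longleftrightarrow> ?criterion")
proof
  assume ?conjugate
  then obtain h where h: "diffeo_plus h" and conj: "f = inv h \<circ> g \<circ> h" by blast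
  have "bij h"
    using h by (simp add: diffeo_plus_def diffeo_def)
  have "g (h 0) = h 0"
    using fun_cong[OF conj, of 0] \<open>f 0 = 0\<close> \<open>bij h\<close> by (metis bij_inv_eq_iff comp_apply)
  then have "h 0 = 0"
    using \<open>diffeo_minus g\<close> \<open>g 0 = 0\<close> by (rule diffeo_minus_fixed_point[rotated 2])
  moreover have "diffeo_plus id"
    by (simp add: diffeo_plus_def diffeo_id)
  moreover have "taylor0 f = fps_inv (taylor0 id) oo (taylor0 f oo taylor0 id)"
    using \<open>f 0 = 0\<close> by (simp add: taylor0_id fps_inv_X taylor0_nth)
  ultimately show ?criterion
    using h conj conjugate_comp_conjugate[OF \<open>bij h\<close>, of g] unfolding Let_def
    by (intro exI[of _ h]) (auto intro!: exI[of _ id])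
next
  assume ?criterion
  then show ?conjugate
    using assms unfolding Let_def by (metis conjugate_of_conjugate_squares)
qed

end
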